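(* Let $\mathbb{X}\subseteq\mathbb{P}^2$ be a $\Bbbk$-configuration of type $(d_1,\dots,d_s)$ with $s\ge2$, defined by subsets $\mathbb{X}_1,\dots,\mathbb{X}_s$ and lines $\mathbb{L}_1,\dots,\mathbb{L}_s$. Let $j,i$ be integers with $0\le j$ and $j+2\le i\le s-1$, and suppose that $|\mathbb{L}_{s-k}\cap\mathbb{X}|=d_s$ for $k=0,\dots,j$; $|\mathbb{L}_{s-k}\cap\mathbb{X}|<d_s$ for $k=j+1,\dots,i-1$; and $|\mathbb{L}_{s-i}\cap\mathbb{X}|=d_s$. Set $\mathbb{T}=\mathbb{L}_{s-i}\cap(\mathbb{X}_{s-j-1}\cup\mathbb{X}_{s-j-2}\cup\cdots\cup\mathbb{X}_{s-i+1})$. Then $\mathbb{X}$ is also a $\Bbbk$-configuration of type $(d_1,\dots,d_s)$ defined by the subsets $\mathbb{X}'_1,\dots,\mathbb{X}'_s$ and lines $\mathbb{L}'_1,\dots,\mathbb{L}'_s$, where: $\mathbb{X}'_k=\mathbb{X}_k$, $\mathbb{L}'_k=\mathbb{L}_k$ for $k=1,\dots,s-i-1$; $\mathbb{X}'_k=\mathbb{X}_{k+1}\setminus\mathbb{T}$, $\mathbb{L}'_k=\mathbb{L}_{k+1}$ for $k=s-i,\dots,s-j-2$; $\mathbb{X}'_{s-j-1}=\mathbb{X}_{s-i}\cup\mathbb{T}$, $\mathbb{L}'_{s-j-1}=\mathbb{L}_{s-i}$; and $\mathbb{X}'_k=\mathbb{X}_k$, $\mathbb{L}'_k=\mathbb{L}_k$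 for $k=s-j,\dots,s$.
   Context: $\Bbbk$ is an algebraically closed field. A $\Bbbk$-configuration of type $(d_1,\dots,d_s)$ is a finite set $\mathbb{X}\subseteq\mathbb{P}^2$ for which there exist integers $1\le d_1<\cdots<d_s$, subsets $\mathbb{X}_1,\dots,\mathbb{X}_s$ of $\mathbb{X}$ and distinct lines $\mathbb{L}_1,\dots,\mathbb{L}_s\subseteq\mathbb{P}^2$ such that (1) $\mathbb{X}=\bigcup_{i=1}^s\mathbb{X}_i$; (2) $|\mathbb{X}_i|=d_i$ and $\mathbb{X}_i\subseteq\mathbb{L}_i$ for each $i$; (3) for $1<i\le s$, $\mathbb{L}_i$ contains no point of $\mathbb{X}_j$ for any $j<i$. We say $\mathbb{X}$ is defined by these subsets and lines; such defining data need not be unique. *)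

theory Defs
  imports "HOL-Computational_Algebra.Polynomial"
begin

text \<open>Points of the projective plane over a field: a point is the set of
  nonzero homogeneous coordinate vectors representing it (a punctured line
  through the origin in the 3-space).\<close>

type_synonym 'a vec3 = "'a \<times> 'a \<times> 'a"

definition scale3 :: "'a::field \<Rightarrow> 'a vec3 \<Rightarrow> 'a vec3" where
  "scale3 c v = (c * fst v, c * fst (snd v), c * snd (snd v))"

definition proj_point_of :: "'a::field vec3 \<Rightarrow> 'a vec3 set" where
  "proj_point_of v = {scale3 c v | c. c \<noteq> 0}"

definition P2 :: "'a::field vec3 set set" where
  "P2 = {proj_point_of v | v. v \<noteq> (0, 0, 0)}"

definition proj_line_of :: "'a::field vec3 \<Rightarrow> 'a vec3 set set" where
  "proj_line_of l = {p \<in> P2. \<forall>v\<in>p.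
      fst l * fst v + fst (snd l) * fst (snd v) + snd (snd l) * snd (snd v) = 0}"

definition is_line :: "'a::field vec3 set set \<Rightarrow> bool" where
  "is_line L \<longleftrightarrow> (\<exists>l. l \<noteq> (0, 0, 0) \<and> L = proj_line_of l)"

definition kconfig ::
  "'a::field vec3 set set \<Rightarrow> (nat \<Rightarrow> nat) \<Rightarrow> (nat \<Rightarrow> 'a vec3 set set)
     \<Rightarrow> (nat \<Rightarrow> 'a vec3 set set) \<Rightarrow> nat \<Rightarrow> bool" where
  "kconfig X d Xs Ls s \<longleftrightarrow>
     finite X \<and> X \<subseteq> P2 \<and>
     (\<forall>i\<in>{1..s}. 1 \<le> d i) \<and>
     (\<forall>i\<in>{1..s}. \<forall>i'\<in>{1..s}. i < i' \<longrightarrow> d i < d i') \<and>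
     X = (\<Union>i\<in>{1..s}. Xs i) \<and>
     (\<forall>i\<in>{1..s}. card (Xs i) = d i \<and> Xs i \<subseteq> Ls i \<and> is_line (Ls i)) \<and>
     inj_on Ls {1..s} \<and>
     (\<forall>i\<in>{1..s}. \<forall>j\<in>{1..s}. 1 < i \<and> j < i \<longrightarrow> Ls i \<inter> Xs j = {})"

end

theory Submission
  imports Defs
begin

(* Two distinct lines meet in at most one point, so Ls a contains the d a points of Xs a and at
   most one point of each Xs m with m > a, i.e. at most d a + (s - a) points of X. Since d is
   strictly increasing, d a + (s - a) \<le> d s. Hence if Ls a carries d s points of X, then
   d m = d a + (m - a) for m \<ge> a and Ls a meets every later Xs m in exactly one point. Moving
   Ls a up to position b together with these b - a points T, and the lines in between down by
   one (each losing its point of T), keeps all cardinalities d k and the incidence conditions. *)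

definition dot3 :: "'a::field vec3 \<Rightarrow> 'a vec3 \<Rightarrow> 'a" where
  "dot3 l v = fst l * fst v + fst (snd l) * fst (snd v) + snd (snd l) * snd (snd v)"

definition cross3 :: "'a::field vec3 \<Rightarrow> 'a vec3 \<Rightarrow> 'a vec3" where
  "cross3 v w =
     (fst (snd v) * snd (snd w) - snd (snd v) * fst (snd w),
      snd (snd v) * fst w - fst v * snd (snd w),
      fst v * fst (snd w) - fst (snd v) * fst w)"

lemma dot3_scale3_right: "dot3 l (scale3 c v) = c * dot3 l v"
  by (simp add: dot3_def scale3_def algebra_simps)

lemma dot3_scale3_left: "dot3 (scale3 c l) v = c * dot3 l v"
  by (simp add: dot3_def scale3_def algebra_simps)

lemma scale3_scale3: "scale3 a (scale3 b v) = scale3 (a * b) v"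
  by (simp add: scale3_def)

lemma scale3_one: "scale3 1 v = v"
  by (simp add: scale3_def)

lemma scale3_eq_0_iff: "scale3 c v = (0, 0, 0) \<longleftrightarrow> c = 0 \<or> v = (0, 0, 0)"
  by (cases v) (auto simp: scale3_def)

lemma cross3_cross3:
  "cross3 l (cross3 v w) =
     (dot3 l w * fst v - dot3 l v * fst w,
      dot3 l w * fst (snd v) - dot3 l v * fst (snd w),
      dot3 l w * snd (snd v) - dot3 l v * snd (snd w))"
  by (simp add: cross3_def dot3_def algebra_simps)

lemma cross3_eq_0_imp_scale3:
  assumes "cross3 u v = (0, 0, 0)" and "v \<noteq> (0, 0, 0)"
  shows "\<exists>c. u = scale3 c v"
proof -
  obtain u1 u2 u3 v1 v2 v3 where uv: "u = (u1, u2, u3)" "v = (v1, v2, v3)"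
    by (cases u, cases v) auto
  have eqs: "u2 * v3 = u3 * v2" "u3 * v1 = u1 * v3" "u1 * v2 = u2 * v1"
    using assms(1) by (simp_all add: uv cross3_def)
  consider "v1 \<noteq> 0" | "v2 \<noteq> 0" | "v3 \<noteq> 0" using assms(2) uv by auto
  then show ?thesis
  proof cases
    case 1
    then have "u = scale3 (u1 / v1) v" using eqs by (simp add: uv scale3_def field_simps)
    then show ?thesis ..
  next
    case 2
    then have "u = scale3 (u2 / v2) v" using eqs by (simp add: uv scale3_def field_simps)
    then show ?thesis ..
  next
    case 3
    then have "u = scale3 (u3 / v3) v" using eqs by (simp add: uv scale3_def field_simps)
    then show ?thesis ..
  qed
qed

lemma mem_proj_point_of: "v \<in> proj_point_of v"
  unfolding proj_point_of_def by (auto intro: exI[of _ 1] simp: scale3_one)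

lemma proj_point_of_scale3:
  assumes "c \<noteq> 0"
  shows "proj_point_of (scale3 c v) = proj_point_of v"
proof -
  have "scale3 c' (scale3 c v) = scale3 (c' * c) v" "scale3 c' v = scale3 (c' / c * c) v" for c'
    using assms by (simp_all add: scale3_scale3)
  then show ?thesis
    unfolding proj_point_of_def using assms by (metis divide_eq_0_iff mult_eq_0_iff)
qed

lemma proj_line_of_dot3: "proj_line_of l = {p \<in> P2. \<forall>v\<in>p. dot3 l v = 0}"
  by (simp add: proj_line_of_def dot3_def)

lemma proj_line_of_scale3:
  assumes "c \<noteq> 0"
  shows "proj_line_of (scale3 c l) = proj_line_of l"
  using assms by (simp add: proj_line_of_dot3 dot3_scale3_left)

lemma proj_point_of_mem_proj_line_of_iff:
  assumes "v \<noteq> (0, 0, 0)"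
  shows "proj_point_of v \<in> proj_line_of l \<longleftrightarrow> dot3 l v = 0"
proof -
  have "proj_point_of v \<in> P2" using assms unfolding P2_def by blast
  moreover have "(\<forall>u\<in>proj_point_of v. dot3 l u = 0) \<longleftrightarrow> dot3 l v = 0"
    using mem_proj_point_of[of v] unfolding proj_point_of_def
    by (auto simp: dot3_scale3_right simp del: split_paired_All)
  ultimately show ?thesis by (simp add: proj_line_of_dot3)
qed

lemma cross3_neq_0:
  assumes "v \<noteq> (0, 0, 0)" "w \<noteq> (0, 0, 0)" "proj_point_of v \<noteq> proj_point_of w"
  shows "cross3 v w \<noteq> (0, 0, 0)"
proof
  assume "cross3 v w = (0, 0, 0)"
  then obtain c where c: "v = scale3 c w" using assms(2) cross3_eq_0_imp_scale3 by blast
  with assms(1) have "c \<noteq> 0" by (auto simp: scale3_eq_0_iff)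
  with c assms(3) show False using proj_point_of_scale3 by metis
qed

lemma proj_line_of_eq_cross3:
  assumes "v \<noteq> (0, 0, 0)" "w \<noteq> (0, 0, 0)" "proj_point_of v \<noteq> proj_point_of w"
    and "l \<noteq> (0, 0, 0)" "dot3 l v = 0" "dot3 l w = 0"
  shows "proj_line_of l = proj_line_of (cross3 v w)"
proof -
  have "cross3 l (cross3 v w) = (0, 0, 0)" using assms(5,6) by (simp add: cross3_cross3)
  then obtain c where c: "l = scale3 c (cross3 v w)"
    using cross3_eq_0_imp_scale3 cross3_neq_0[OF assms(1-3)] by blast
  with assms(4) have "c \<noteq> 0" by (auto simp: scale3_eq_0_iff)
  with c show ?thesis by (simp add: proj_line_of_scale3)
qed

lemma is_line_inter_eq:
  assumes "is_line L" "is_line L'" "L \<noteq> L'" "p \<in> L \<inter> L'" "q \<in> L \<inter> L'"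
  shows "p = q"
proof (rule ccontr)
  assume pq: "p \<noteq> q"
  obtain l l' where l: "l \<noteq> (0, 0, 0)" "L = proj_line_of l"
    and l': "l' \<noteq> (0, 0, 0)" "L' = proj_line_of l'"
    using assms(1,2) unfolding is_line_def by blast
  obtain v w where v: "v \<noteq> (0, 0, 0)" "p = proj_point_of v"
    and w: "w \<noteq> (0, 0, 0)" "q = proj_point_of w"
    using assms(4,5) l(2) unfolding proj_line_of_def P2_def by blast
  have "dot3 l v = 0" "dot3 l w = 0" "dot3 l' v = 0" "dot3 l' w = 0"
    using assms(4,5) l l' v w proj_point_of_mem_proj_line_of_iff by blast+
  then have "L = L'"
    using proj_line_of_eq_cross3[OF v(1) w(1)] pq v w l l' by metis
  with assms(3) show False ..
qed

lemma card_is_line_inter_le_1: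
  assumes "is_line L" "is_line L'" "L \<noteq> L'" "finite A" "A \<subseteq> L'"
  shows "card (L \<inter> A) \<le> 1"
proof -
  have "\<forall>p\<in>L \<inter> A. \<forall>q\<in>L \<inter> A. p = q"
    using is_line_inter_eq[OF assms(1-3)] assms(5) by blast
  with assms(4) show ?thesis by (simp add: card_le_Suc0_iff_eq)
qed

lemma strict_mono_gap:
  fixes f :: "nat \<Rightarrow> nat"
  assumes "\<And>k. m \<le> k \<Longrightarrow> k < n \<Longrightarrow> f k < f (Suc k)" and "m \<le> n"
  shows "f m + (n - m) \<le> f n"
  using assms(2,1)
proof (induction n rule: nat_induct_at_least)
  case (Suc n)
  then have "f m + (n - m) \<le> f n" and "f n < f (Suc n)" by simp_all
  with Suc.hyps show ?case by (simp add: Suc_diff_le)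
qed simp

context
  fixes X :: "'a::field vec3 set set" and d :: "nat \<Rightarrow> nat"
    and Xs Ls :: "nat \<Rightarrow> 'a vec3 set set" and s :: nat
  assumes conf: "kconfig X d Xs Ls s"
begin

lemma kconfig_finite: "finite X"
  and kconfig_Xs_subset_Ls: "k \<in> {1..s} \<Longrightarrow> Xs k \<subseteq> Ls k"
  and kconfig_card_Xs: "k \<in> {1..s} \<Longrightarrow> card (Xs k) = d k"
  and kconfig_is_line: "k \<in> {1..s} \<Longrightarrow> is_line (Ls k)"
  and kconfig_inj_on_Ls: "inj_on Ls {1..s}"
  and kconfig_union: "X = (\<Union>k\<in>{1..s}. Xs k)"
  and kconfig_Ls_inter_Xs_below:
    "k \<in> {1..s} \<Longrightarrow> m \<in> {1..s} \<Longrightarrow> m < k \<Longrightarrow> Ls k \<inter> Xs m = {}"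
  using conf by (auto simp: kconfig_def)

lemma kconfig_finite_Xs: "k \<in> {1..s} \<Longrightarrow> finite (Xs k)"
  using kconfig_finite kconfig_union by (auto intro: finite_subset)

lemma kconfig_Xs_disjoint:
  assumes "k \<in> {1..s}" "m \<in> {1..s}" "k \<noteq> m"
  shows "Xs k \<inter> Xs m = {}"
proof (cases "m < k")
  case True
  then show ?thesis using assms kconfig_Ls_inter_Xs_below kconfig_Xs_subset_Ls by blast
next
  case False
  then have "k < m" using assms(3) by simp
  then show ?thesis using assms kconfig_Ls_inter_Xs_below kconfig_Xs_subset_Ls by blast
qed

lemma kconfig_d_gap: "1 \<le> m \<Longrightarrow> m \<le> n \<Longrightarrow> n \<le> s \<Longrightarrow> d m + (n - m) \<le> d n"
  using conf by (intro strict_mono_gap) (auto simp: kconfig_def)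

lemma kconfig_card_Ls_inter:
  assumes "a \<in> {1..s}"
  shows "card (Ls a \<inter> X) = d a + (\<Sum>m\<in>{a<..s}. card (Ls a \<inter> Xs m))"
proof -
  have on_line: "Ls a \<inter> X = (\<Union>m\<in>{a..s}. Ls a \<inter> Xs m)"
    using assms kconfig_union kconfig_Ls_inter_Xs_below[OF assms] by fastforce
  have disjoint: "Ls a \<inter> Xs m \<inter> (Ls a \<inter> Xs m') = {}"
    if "m \<in> {a..s}" "m' \<in> {a..s}" "m \<noteq> m'" for m m'
    using that assms kconfig_Xs_disjoint[of m m'] by auto
  have "card (Ls a \<inter> X) = (\<Sum>m\<in>{a..s}. card (Ls a \<inter> Xs m))"
    unfolding on_line by (rule card_UN_disjoint) (use assms kconfig_finite_Xs disjoint in auto)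
  also have "\<dots> = card (Ls a \<inter> Xs a) + (\<Sum>m\<in>{a<..s}. card (Ls a \<inter> Xs m))"
    using assms by (simp add: sum.head)
  finally show ?thesis
    using assms kconfig_card_Xs kconfig_Xs_subset_Ls by (simp add: Int_absorb1)
qed

lemma kconfig_card_Ls_inter_Xs_above_le_1:
  assumes "a \<in> {1..s}" "m \<in> {a<..s}"
  shows "card (Ls a \<inter> Xs m) \<le> 1"
proof (rule card_is_line_inter_le_1)
  show "Ls a \<noteq> Ls m"
    using assms kconfig_inj_on_Ls by (auto dest: inj_onD)
qed (use assms kconfig_is_line kconfig_finite_Xs kconfig_Xs_subset_Ls in auto)

lemma kconfig_full_line_meets_above_once:
  assumes "a \<in> {1..s}" "card (Ls a \<inter> X) = d s" "m \<in> {a<..s}"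
  shows "card (Ls a \<inter> Xs m) = 1"
proof -
  let ?c = "\<lambda>m. card (Ls a \<inter> Xs m)"
  have le1: "\<forall>m\<in>{a<..s}. ?c m \<le> 1"
    using kconfig_card_Ls_inter_Xs_above_le_1[OF assms(1)] by blast
  have "s - a \<le> sum ?c {a<..s}"
    using assms(1,2) kconfig_card_Ls_inter kconfig_d_gap[of a s] by auto
  moreover have "(\<Sum>m\<in>{a<..s}. 1 - ?c m) = (\<Sum>m\<in>{a<..s}. 1) - sum ?c {a<..s}"
    using le1 by (intro sum_subtractf_nat) auto
  ultimately have "(\<Sum>m\<in>{a<..s}. 1 - ?c m) = 0" by simp
  then have "1 - ?c m = 0" using assms(3) by (simp add: sum_eq_0_iff)
  then show ?thesis using le1 assms(3) by (simp add: le_antisym)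
qed

lemma kconfig_full_line_consecutive_d:
  assumes "a \<in> {1..s}" "card (Ls a \<inter> X) = d s" "m \<in> {a..s}"
  shows "d m = d a + (m - a)"
proof -
  have "d s \<le> d a + (s - a)"
    using assms kconfig_card_Ls_inter kconfig_card_Ls_inter_Xs_above_le_1
      sum_mono[of "{a<..s}" "\<lambda>m. card (Ls a \<inter> Xs m)" "\<lambda>_. 1"] by auto
  then show ?thesis
    using assms kconfig_d_gap[of a m] kconfig_d_gap[of m s] by auto
qed

end

locale kconfig_full_line =
  fixes X :: "'a::field vec3 set set" and d :: "nat \<Rightarrow> nat"
    and Xs Ls :: "nat \<Rightarrow> 'a vec3 set set" and s a b :: nat
  assumes conf: "kconfig X d Xs Ls s"
    and a_pos: "1 \<le> a" and a_less_b: "a < b" and b_le_s: "b \<le> s"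
    and full: "card (Ls a \<inter> X) = d s"
begin

(* With a = s - i and b = s - j - 1, T, Xs' and Ls' are the paper's T, X'_k and L'_k. *)

definition shift :: "nat \<Rightarrow> nat" where
  "shift k = (if k < a then k else if k < b then Suc k else if k = b then a else k)"

definition T :: "'a vec3 set set" where
  "T = Ls a \<inter> (\<Union>m\<in>{a<..b}. Xs m)"

definition Xs' :: "nat \<Rightarrow> 'a vec3 set set" where
  "Xs' = (\<lambda>k. if k < a then Xs k else if k < b then Xs (Suc k) - T
                 else if k = b then Xs a \<union> T else Xs k)"

definition Ls' :: "nat \<Rightarrow> 'a vec3 set set" where
  "Ls' = (\<lambda>k. if k < a then Ls k else if k < b then Ls (Suc k)
                 else if k = b then Ls a else Ls k)"

lemma Ls'_eq_comp_shift: "Ls' = Ls \<circ> shift"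
  by (simp add: fun_eq_iff Ls'_def shift_def)

lemma a_mem: "a \<in> {1..s}"
  using a_pos a_less_b b_le_s by simp

lemma shift_mem: "k \<in> {1..s} \<Longrightarrow> shift k \<in> {1..s}"
  using a_pos a_less_b b_le_s by (auto simp: shift_def)

lemma inj_on_shift: "inj_on shift {1..s}"
  using a_less_b by (auto simp: inj_on_def shift_def)

lemma shift_less: "m < k \<Longrightarrow> m \<noteq> b \<Longrightarrow> k \<noteq> b \<Longrightarrow> shift m < shift k"
  by (auto simp: shift_def)

lemma Xs'_subset_Xs_shift: "k \<noteq> b \<Longrightarrow> Xs' k \<subseteq> Xs (shift k)"
  by (auto simp: Xs'_def shift_def)

lemma Xs'_b: "Xs' b = Xs a \<union> T"
  using a_less_b by (simp add: Xs'_def)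

lemma Ls'_b: "Ls' b = Ls a"
  using a_less_b by (simp add: Ls'_def)

lemma Ls_inter_Xs_eq_Xs_inter_T: "m \<in> {a<..b} \<Longrightarrow> Ls a \<inter> Xs m = Xs m \<inter> T"
  by (auto simp: T_def)

lemma T_subset_X: "T \<subseteq> X"
  using b_le_s a_pos kconfig_union[OF conf] by (force simp: T_def)

lemma Xs_a_inter_T: "Xs a \<inter> T = {}"
proof -
  have "Xs a \<inter> Xs m = {}" if "m \<in> {a<..b}" for m
    using that a_mem b_le_s kconfig_Xs_disjoint[OF conf, of a m] by auto
  then show ?thesis unfolding T_def by blast
qed

lemma card_T: "card T = b - a"
proof -
  have "T = (\<Union>m\<in>{a<..b}. Ls a \<inter> Xs m)" by (auto simp: T_def)
  also have "card \<dots> = (\<Sum>m\<in>{a<..b}. card (Ls a \<inter> Xs m))"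
  proof (rule card_UN_disjoint)
    show "\<forall>m\<in>{a<..b}. finite (Ls a \<inter> Xs m)"
      using a_pos b_le_s kconfig_finite_Xs[OF conf] by auto
    show "\<forall>m\<in>{a<..b}. \<forall>m'\<in>{a<..b}. m \<noteq> m' \<longrightarrow> Ls a \<inter> Xs m \<inter> (Ls a \<inter> Xs m') = {}"
    proof (intro ballI impI)
      fix m m' assume "m \<in> {a<..b}" "m' \<in> {a<..b}" "m \<noteq> m'"
      then have "Xs m \<inter> Xs m' = {}"
        using a_pos b_le_s kconfig_Xs_disjoint[OF conf, of m m'] by auto
      then show "Ls a \<inter> Xs m \<inter> (Ls a \<inter> Xs m') = {}" by blast
    qed
  qed simp
  also have "\<dots> = (\<Sum>m\<in>{a<..b}. 1)"
    using b_le_s kconfig_full_line_meets_above_once[OF conf a_mem full] by (intro sum.cong) auto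
  finally show ?thesis by simp
qed

lemma Xs'_subset_X:
  assumes "k \<in> {1..s}"
  shows "Xs' k \<subseteq> X"
proof (cases "k = b")
  case True
  then show ?thesis using Xs'_b T_subset_X a_mem kconfig_union[OF conf] by auto
next
  case False
  then show ?thesis
    using assms Xs'_subset_Xs_shift[OF False] shift_mem[of k] kconfig_union[OF conf] by blast
qed

lemma union_Xs': "X = (\<Union>k\<in>{1..s}. Xs' k)"
proof (intro equalityI subsetI)
  fix x assume "x \<in> X"
  then obtain m where m: "m \<in> {1..s}" "x \<in> Xs m" using kconfig_union[OF conf] by blast
  have b_mem: "b \<in> {1..s}" using a_pos a_less_b b_le_s by simp
  consider "m < a \<or> b < m" | "m = a" | "a < m" "m \<le> b" "x \<in> T" | "a < m" "m \<le> b" "x \<notin> T"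
    by linarith
  then show "x \<in> (\<Union>k\<in>{1..s}. Xs' k)"
  proof cases
    case 1
    then have "Xs' m = Xs m" using a_less_b by (auto simp: Xs'_def)
    then show ?thesis using m by blast
  next
    case 2
    then show ?thesis using m b_mem Xs'_b by blast
  next
    case 3
    then show ?thesis using b_mem Xs'_b by blast
  next
    case 4
    then have "x \<in> Xs' (m - 1)" "m - 1 \<in> {1..s}" using m a_pos by (auto simp: Xs'_def)
    then show ?thesis by blast
  qed
qed (use Xs'_subset_X in blast)

lemma card_Xs':
  assumes k: "k \<in> {1..s}"
  shows "card (Xs' k) = d k"
proof -
  have d_consecutive: "m \<in> {a..s} \<Longrightarrow> d m = d a + (m - a)" for m
    using kconfig_full_line_consecutive_d[OF conf a_mem full] .
  consider "k < a \<or> b < k" | "a \<le> k" "k < b" | "k = b" by linarith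
  then show ?thesis
  proof cases
    case 1
    then show ?thesis using k a_less_b kconfig_card_Xs[OF conf] by (auto simp: Xs'_def)
  next
    case 2
    then have Suc_k: "Suc k \<in> {1..s}" "Suc k \<in> {a<..b}" using b_le_s by auto
    have "card (Xs (Suc k) - T) = card (Xs (Suc k)) - card (Xs (Suc k) \<inter> T)"
      using kconfig_finite_Xs[OF conf Suc_k(1)] by (simp add: card_Diff_subset_Int)
    also have "\<dots> = d (Suc k) - 1"
      using kconfig_card_Xs[OF conf Suc_k(1)] Ls_inter_Xs_eq_Xs_inter_T[OF Suc_k(2), symmetric]
        kconfig_full_line_meets_above_once[OF conf a_mem full, of "Suc k"] Suc_k b_le_s by simp
    also have "\<dots> = d k" using 2 b_le_s d_consecutive[of k] d_consecutive[of "Suc k"] by auto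
    finally show ?thesis using 2 by (simp add: Xs'_def)
  next
    case 3
    have "card (Xs a \<union> T) = card (Xs a) + card T"
      using Xs_a_inter_T kconfig_finite_Xs[OF conf a_mem]
        finite_subset[OF T_subset_X kconfig_finite[OF conf]] by (intro card_Un_disjoint) auto
    also have "\<dots> = d b"
      using card_T kconfig_card_Xs[OF conf a_mem] d_consecutive[of b] a_less_b b_le_s by auto
    finally show ?thesis using 3 Xs'_b by simp
  qed
qed

lemma Xs'_subset_Ls':
  assumes "k \<in> {1..s}"
  shows "Xs' k \<subseteq> Ls' k"
proof (cases "k = b")
  case True
  then show ?thesis
    using Xs'_b Ls'_b kconfig_Xs_subset_Ls[OF conf a_mem] unfolding T_def by blast
next
  case False
  then show ?thesis
    using assms Xs'_subset_Xs_shift shift_mem kconfig_Xs_subset_Ls[OF conf]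
    unfolding Ls'_eq_comp_shift comp_def by blast
qed

lemma is_line_Ls': "k \<in> {1..s} \<Longrightarrow> is_line (Ls' k)"
  unfolding Ls'_eq_comp_shift comp_def using shift_mem kconfig_is_line[OF conf] by blast

lemma inj_on_Ls': "inj_on Ls' {1..s}"
  unfolding Ls'_eq_comp_shift
proof (rule comp_inj_on[OF inj_on_shift])
  show "inj_on Ls (shift ` {1..s})"
    using inj_on_subset[OF kconfig_inj_on_Ls[OF conf]] shift_mem by blast
qed

lemma Ls'_inter_Xs'_below:
  assumes k: "k \<in> {1..s}" and m: "m \<in> {1..s}" and "m < k"
  shows "Ls' k \<inter> Xs' m = {}"
proof -
  consider "m \<noteq> b" "k \<noteq> b" | "k = b" "m < a" | "k = b" "a \<le> m" | "m = b"
    using \<open>m < k\<close> by linarith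
  then show ?thesis
  proof cases
    case 1
    then have "shift m < shift k" using \<open>m < k\<close> by (simp add: shift_less)
    then have "Ls (shift k) \<inter> Xs (shift m) = {}"
      using kconfig_Ls_inter_Xs_below[OF conf shift_mem[OF k] shift_mem[OF m]] by simp
    then show ?thesis
      using Xs'_subset_Xs_shift[OF 1(1)] unfolding Ls'_eq_comp_shift comp_def by blast
  next
    case 2
    then have "Ls' k = Ls a" "Xs' m = Xs m" using Ls'_b by (simp_all add: Xs'_def)
    then show ?thesis using kconfig_Ls_inter_Xs_below[OF conf a_mem m 2(2)] by simp
  next
    case 3
    then have Ls': "Ls' k = Ls a" and Xs': "Xs' m = Xs (Suc m) - T" and "Suc m \<in> {a<..b}"
      using \<open>m < k\<close> Ls'_b by (simp_all add: Xs'_def)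
    then have "Ls a \<inter> Xs (Suc m) \<subseteq> T" using Ls_inter_Xs_eq_Xs_inter_T by blast
    then show ?thesis unfolding Ls' Xs' by blast
  next
    case 4
    have below: "Ls k \<inter> Xs j = {}" if "j \<in> {a..b}" for j
      using that k 4 \<open>m < k\<close> a_pos kconfig_Ls_inter_Xs_below[OF conf] by simp
    have "Ls' k = Ls k" using 4 \<open>m < k\<close> by (simp add: Ls'_def)
    moreover have "Xs' m \<subseteq> (\<Union>j\<in>{a..b}. Xs j)"
      using 4 Xs'_b a_less_b by (force simp: T_def)
    ultimately show ?thesis using below by blast
  qed
qed

theorem kconfig_Xs'_Ls': "kconfig X d Xs' Ls' s"
proof -
  have "finite X \<and> X \<subseteq> P2 \<and> (\<forall>i\<in>{1..s}. 1 \<le> d i) \<and>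
      (\<forall>i\<in>{1..s}. \<forall>i'\<in>{1..s}. i < i' \<longrightarrow> d i < d i')"
    using conf unfolding kconfig_def by (elim conjE) (intro conjI; assumption)
  moreover have "\<forall>k\<in>{1..s}. card (Xs' k) = d k \<and> Xs' k \<subseteq> Ls' k \<and> is_line (Ls' k)"
    using card_Xs' Xs'_subset_Ls' is_line_Ls' by simp
  moreover have "\<forall>k\<in>{1..s}. \<forall>m\<in>{1..s}. 1 < k \<and> m < k \<longrightarrow> Ls' k \<inter> Xs' m = {}"
    using Ls'_inter_Xs'_below by simp
  ultimately show ?thesis
    unfolding kconfig_def using union_Xs' inj_on_Ls' by (elim conjE) (intro conjI; assumption)
qed

end

theorem lemma2p9:
  fixes X :: "'a::alg_closed_field vec3 set set"
    and d :: "nat \<Rightarrow> nat"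
    and Xs :: "nat \<Rightarrow> 'a vec3 set set"
    and Ls :: "nat \<Rightarrow> 'a vec3 set set"
    and s i j :: nat
  assumes conf: "kconfig X d Xs Ls s"
    and s2: "2 \<le> s"
    and ij: "j + 2 \<le> i" and i_s: "i \<le> s - 1"
    and full_top: "\<forall>k\<in>{0..j}. card (Ls (s - k) \<inter> X) = d s"
    and middle: "\<forall>k\<in>{j+1..i-1}. card (Ls (s - k) \<inter> X) < d s"
    and full_i: "card (Ls (s - i) \<inter> X) = d s"
  shows "let T = Ls (s - i) \<inter> (\<Union>k\<in>{s-i+1..s-j-1}. Xs k) in
    kconfig X d
      (\<lambda>k. if k \<le> s - i - 1 then Xs k
           else if k \<le> s - j - 2 then Xs (k + 1) - T
           else if k = s - j - 1 then Xs (s - i) \<union> T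
           else Xs k)
      (\<lambda>k. if k \<le> s - i - 1 then Ls k
           else if k \<le> s - j - 2 then Ls (k + 1)
           else if k = s - j - 1 then Ls (s - i)
           else Ls k)
      s"
proof -
  define a b where "a = s - i" and "b = s - j - 1"
  have a_pos: "1 \<le> a" and a_less_b: "a < b" and b_le_s: "b \<le> s"
    using s2 ij i_s by (auto simp: a_def b_def)
  interpret kconfig_full_line X d Xs Ls s a b
    using conf full_i a_pos a_less_b b_le_s by unfold_locales (simp_all add: a_def)
  have "s - i - 1 = a - 1" "s - j - 2 = b - 1" "s - j - 1 = b" "s - i = a" "s - i + 1 = Suc a"
    by (simp_all add: a_def b_def)
  moreover have "k \<le> a - 1 \<longleftrightarrow> k < a" "k \<le> b - 1 \<longleftrightarrow> k < b" for k
    using a_pos a_less_b by auto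
  moreover have "{Suc a..b} = {a<..b}" by auto
  ultimately show ?thesis
    using kconfig_Xs'_Ls'
    by (simp add: Let_def T_def Xs'_def Ls'_def cong: if_cong)
qed

end
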